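(* Let $d,p,n$ be positive integers and let $V_1,\dots,V_n$ be i.i.d. random $d\times dp$ matrices with i.i.d. real $\mathcal{N}(0,\frac1{dp})$ entries. For any $d$ and $\varepsilon>0$ there exist $p_0$ and $n_0$ such that for any $p>p_0$ and $n>n_0$, \[ \max_{O_1,\dots,O_n \in \mathcal{O}_d}\left\|\frac1n\sum_{i=1}^n O_i^T V_i \right\|_F^2 \leq \frac{d}p\alpha_{\mathbb{R}}(d)^2 + \varepsilon \] with probability strictly larger than $1/2$.
   Context: $\mathcal{O}_d$ is the group of real $d\times d$ orthogonal matrices. For $G\in\mathbb{R}^{d\times d}$ with i.i.d. real $\mathcal{N}(0,d^{-1})$ entries, $\alpha_{\mathbb{R}}(d)=\mathbb{E}\left[\frac1d\sum_{j=1}^d\sigma_j(G)\right]$, where $\sigma_j$ is the $j$-th singular value. *)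

theory Defs
  imports "HOL-Probability.Probability" "Jordan_Normal_Form.Char_Poly"
begin

definition orth_group :: "nat \<Rightarrow> real mat set" where
  "orth_group d = {Q. Q \<in> carrier_mat d d \<and> transpose_mat Q * Q = 1\<^sub>m d}"

definition frob_sq :: "real mat \<Rightarrow> real" where
  "frob_sq A = (\<Sum>i<dim_row A. \<Sum>j<dim_col A. (A $$ (i,j))\<^sup>2)"

(* Sum of the singular values of G: singular values are the square roots of
   the eigenvalues of G^T G, counted with (algebraic) multiplicity. *)
definition sum_singular_values :: "real mat \<Rightarrow> real" where
  "sum_singular_values G =
     (let q = char_poly (transpose_mat G * G)
      in \<Sum>x\<in>{x. poly q x = 0}. real (order x q) * sqrt x)"

definition gauss_field :: "'i set \<Rightarrow> real \<Rightarrow> ('i \<Rightarrow> real) measure" where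
  "gauss_field I var = PiM I (\<lambda>_. density lborel (normal_density 0 (sqrt var)))"

definition alpha_R :: "nat \<Rightarrow> real" where
  "alpha_R d = integral\<^sup>L (gauss_field ({..<d} \<times> {..<d}) (1 / real d))
      (\<lambda>g. (1 / real d) * sum_singular_values (mat d d g))"

definition Vmat :: "nat \<Rightarrow> nat \<Rightarrow> (nat \<times> nat \<times> nat \<Rightarrow> real) \<Rightarrow> nat \<Rightarrow> real mat" where
  "Vmat d p w i = mat d (d * p) (\<lambda>(a, b). w (i, a, b))"

definition aligned_sq :: "nat \<Rightarrow> nat \<Rightarrow> nat \<Rightarrow> (nat \<Rightarrow> real mat) \<Rightarrow> (nat \<times> nat \<times> nat \<Rightarrow> real) \<Rightarrow> real" where
  "aligned_sq d p n Os w =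
     frob_sq (mat d (d * p) (\<lambda>(a, b). (1 / real n) *
       (\<Sum>i<n. (transpose_mat (Os i) * Vmat d p w i) $$ (a, b))))"

end

theory Submission
  imports Defs
begin

text \<open>Let \<open>W\<close> be the \<open>nd \<times> dp\<close> matrix stacking \<open>V\<^sub>1, \<dots>, V\<^sub>n\<close>. For orthogonal \<open>O\<^sub>i\<close>,
  each column of \<open>(1/n) \<Sum> O\<^sub>i\<^sup>T V\<^sub>i\<close> is \<open>u\<^sup>T W\<close> for a vector \<open>u\<close> with \<open>\<parallel>u\<parallel>\<^sup>2 = 1/n\<close>,
  so by Cauchy-Schwarz the squared Frobenius norm is at most \<open>(d/n) \<parallel>W W\<^sup>T\<parallel>\<^sub>F\<close>, uniformly
  in the \<open>O\<^sub>i\<close>. Gaussian fourth moments give \<open>E \<parallel>W W\<^sup>T\<parallel>\<^sub>F\<^sup>2 \<le> 3(nd + n\<^sup>2d/p)\<close>, and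
  Markov's inequality then bounds the supremum by \<open>3 \<surd>(d\<^sup>3/n + d\<^sup>3/p)\<close> with probability
  at least \<open>2/3\<close>; this is below \<open>\<epsilon>\<close> for large \<open>n\<close> and \<open>p\<close>. The term
  \<open>(d/p) \<alpha>\<^sub>\<real>(d)\<^sup>2\<close> enters only through its nonnegativity.\<close>

lemma orth_group_col_sum_sq:
  assumes "Q \<in> orth_group d" "a < d"
  shows "(\<Sum>k<d. (Q $$ (k, a))\<^sup>2) = 1"
proof -
  have Q: "Q \<in> carrier_mat d d" "transpose_mat Q * Q = 1\<^sub>m d"
    using assms(1) by (auto simp: orth_group_def)
  then have "(transpose_mat Q * Q) $$ (a, a) = 1" using assms(2) by simp
  then show ?thesis using Q(1) assms(2)
    by (simp add: scalar_prod_def lessThan_atLeast0 col_def row_def power2_eq_square)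
qed

lemma sum_sq_lincomb_le_gram:
  fixes u :: "'r \<Rightarrow> real" and W :: "'r \<Rightarrow> 'b \<Rightarrow> real"
  assumes "finite R" "finite B"
  shows "(\<Sum>b\<in>B. (\<Sum>r\<in>R. u r * W r b)\<^sup>2)
    \<le> (\<Sum>r\<in>R. (u r)\<^sup>2) * sqrt (\<Sum>r\<in>R. \<Sum>s\<in>R. (\<Sum>b\<in>B. W r b * W s b)\<^sup>2)"
proof -
  let ?G = "\<lambda>q. \<Sum>b\<in>B. W (fst q) b * W (snd q) b"
  let ?U = "\<lambda>q. u (fst q) * u (snd q)"
  have "(\<Sum>b\<in>B. (\<Sum>r\<in>R. u r * W r b)\<^sup>2) = (\<Sum>b\<in>B. \<Sum>r\<in>R. \<Sum>s\<in>R. u r * W r b * (u s * W s b))"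
    by (simp add: power2_eq_square sum_product)
  also have "\<dots> = (\<Sum>r\<in>R. \<Sum>s\<in>R. \<Sum>b\<in>B. u r * W r b * (u s * W s b))"
    by (subst sum.swap) (simp add: sum.swap[of _ B])
  also have "\<dots> = (\<Sum>q\<in>R \<times> R. ?U q * ?G q)"
    by (simp add: sum.cartesian_product' sum_distrib_left mult_ac)
  also have "\<dots> \<le> sqrt ((\<Sum>q\<in>R \<times> R. (?U q)\<^sup>2) * (\<Sum>q\<in>R \<times> R. (?G q)\<^sup>2))"
    by (rule real_le_rsqrt) (rule Cauchy_Schwarz_ineq_sum)
  also have "(\<Sum>q\<in>R \<times> R. (?U q)\<^sup>2) = (\<Sum>r\<in>R. (u r)\<^sup>2)\<^sup>2"
    by (simp add: sum.cartesian_product' power_mult_distrib power2_eq_square[of "sum _ _"]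
        sum_product)
  also have "sqrt ((\<Sum>r\<in>R. (u r)\<^sup>2)\<^sup>2 * (\<Sum>q\<in>R \<times> R. (?G q)\<^sup>2))
      = (\<Sum>r\<in>R. (u r)\<^sup>2) * sqrt (\<Sum>r\<in>R. \<Sum>s\<in>R. (\<Sum>b\<in>B. W r b * W s b)\<^sup>2)"
    by (simp add: real_sqrt_mult sum_nonneg sum.cartesian_product')
  finally show ?thesis .
qed

lemma aligned_sq_eq_sum:
  assumes "\<forall>i<n. Os i \<in> carrier_mat d d"
  shows "aligned_sq d p n Os w
    = (\<Sum>a<d. \<Sum>b<d * p. ((1 / real n) * (\<Sum>i<n. \<Sum>k<d. Os i $$ (k, a) * w (i, k, b)))\<^sup>2)"
proof -
  have "(transpose_mat (Os i) * Vmat d p w i) $$ (a, b) = (\<Sum>k<d. Os i $$ (k, a) * w (i, k, b))"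
    if "i < n" "a < d" "b < d * p" for i a b
    using assms[rule_format, OF that(1)] that by (simp add: Vmat_def scalar_prod_def lessThan_atLeast0 col_def row_def)
  then show ?thesis unfolding aligned_sq_def frob_sq_def
    by (auto intro!: sum.cong)
qed

text \<open>\<open>\<parallel>W W\<^sup>T\<parallel>\<^sub>F\<^sup>2\<close>, the rows of \<open>W\<close> being indexed by the pairs \<open>(i, k)\<close>.\<close>
definition gram_sq :: "nat \<Rightarrow> nat \<Rightarrow> nat \<Rightarrow> (nat \<times> nat \<times> nat \<Rightarrow> real) \<Rightarrow> real" where
  "gram_sq d p n w = (\<Sum>r\<in>{..<n} \<times> {..<d}. \<Sum>s\<in>{..<n} \<times> {..<d}.
      (\<Sum>b<d * p. w (fst r, snd r, b) * w (fst s, snd s, b))\<^sup>2)"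

lemma aligned_sq_le_gram_sq:
  assumes "\<forall>i<n. Os i \<in> orth_group d" "n > 0"
  shows "aligned_sq d p n Os w \<le> real d / real n * sqrt (gram_sq d p n w)"
proof -
  let ?R = "{..<n} \<times> {..<d}"
  have column_bound: "(\<Sum>b<d * p. ((1 / real n) * (\<Sum>i<n. \<Sum>k<d. Os i $$ (k, a) * w (i, k, b)))\<^sup>2)
     \<le> 1 / real n * sqrt (gram_sq d p n w)" if "a < d" for a
  proof -
    define u where "u r = Os (fst r) $$ (snd r, a) / real n" for r
    have "(\<Sum>r\<in>?R. (u r)\<^sup>2) = (\<Sum>i<n. (\<Sum>k<d. (Os i $$ (k, a))\<^sup>2) / (real n)\<^sup>2)"
      by (simp add: u_def sum.cartesian_product' power_divide sum_divide_distrib)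
    also have "\<dots> = (\<Sum>i<n. 1 / (real n)\<^sup>2)"
      using orth_group_col_sum_sq assms \<open>a < d\<close> by (intro sum.cong) auto
    also have "\<dots> = 1 / real n"
      using assms(2) by (simp add: power2_eq_square)
    finally have "(\<Sum>r\<in>?R. (u r)\<^sup>2) = 1 / real n" .
    moreover have "(1 / real n) * (\<Sum>i<n. \<Sum>k<d. Os i $$ (k, a) * w (i, k, b))
        = (\<Sum>r\<in>?R. u r * w (fst r, snd r, b))" for b
      by (simp add: u_def sum.cartesian_product' sum_distrib_left)
    ultimately show ?thesis
      using sum_sq_lincomb_le_gram[of ?R "{..<d * p}" u "\<lambda>r b. w (fst r, snd r, b)"]
      by (simp add: gram_sq_def)
  qed
  have "\<forall>i<n. Os i \<in> carrier_mat d d" using assms(1) by (auto simp: orth_group_def)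
  then have "aligned_sq d p n Os w \<le> (\<Sum>a<d. 1 / real n * sqrt (gram_sq d p n w))"
    by (simp only: aligned_sq_eq_sum) (intro sum_mono column_bound, simp)
  then show ?thesis by simp
qed

lemma one_mat_in_orth_group: "1\<^sub>m d \<in> orth_group d"
  by (simp add: orth_group_def)

lemma orth_tuples_nonempty: "{Os. \<forall>i<n. Os i \<in> orth_group d} \<noteq> {}"
proof -
  have "(\<lambda>_. 1\<^sub>m d) \<in> {Os. \<forall>i<n. Os i \<in> orth_group d}"
    by (simp add: one_mat_in_orth_group)
  then show ?thesis by (metis empty_iff)
qed

lemma SUP_aligned_sq_le_gram_sq:
  assumes "n > 0"
  shows "(SUP Os \<in> {Os. \<forall>i<n. Os i \<in> orth_group d}. aligned_sq d p n Os w)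
    \<le> real d / real n * sqrt (gram_sq d p n w)"
proof (rule cSUP_least)
  show "{Os. \<forall>i<n. Os i \<in> orth_group d} \<noteq> {}" by (rule orth_tuples_nonempty)
next
  fix Os assume "Os \<in> {Os. \<forall>i<n. Os i \<in> orth_group d}"
  then show "aligned_sq d p n Os w \<le> real d / real n * sqrt (gram_sq d p n w)"
    by (intro aligned_sq_le_gram_sq assms) simp
qed

definition centered_normal :: "real \<Rightarrow> real measure" where
  "centered_normal \<sigma> = density lborel (normal_density 0 \<sigma>)"

lemma prob_space_centered_normal: "\<sigma> > 0 \<Longrightarrow> prob_space (centered_normal \<sigma>)"
  unfolding centered_normal_def by (rule prob_space_normal_density)

lemma sets_centered_normal [measurable_cong, simp]: "sets (centered_normal \<sigma>) = sets borel"
  by (simp add: centered_normal_def)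

lemma space_centered_normal [simp]: "space (centered_normal \<sigma>) = UNIV"
  by (simp add: centered_normal_def)

lemma gauss_field_eq_PiM_centered_normal:
  "gauss_field I var = PiM I (\<lambda>_. centered_normal (sqrt var))"
  by (simp add: gauss_field_def centered_normal_def)

lemma integrable_centered_normal_power:
  "\<sigma> > 0 \<Longrightarrow> integrable (centered_normal \<sigma>) (\<lambda>t. t ^ k)"
  unfolding centered_normal_def using integrable_normal_moment[of \<sigma> 0 k]
  by (subst integrable_density) (auto simp: normal_density_nonneg)

lemma integral_centered_normal_power_odd:
  "\<sigma> > 0 \<Longrightarrow> integral\<^sup>L (centered_normal \<sigma>) (\<lambda>t. t ^ (2 * k + 1)) = 0"
  unfolding centered_normal_def using integral_normal_moment_odd[of \<sigma> 0 k]
  by (subst integral_density) (auto simp: normal_density_nonneg)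

lemma integral_centered_normal_power4:
  "\<sigma> > 0 \<Longrightarrow> integral\<^sup>L (centered_normal \<sigma>) (\<lambda>t. t ^ 4) = 3 * \<sigma> ^ 4"
  unfolding centered_normal_def using integral_normal_moment_even[of \<sigma> 0 2]
  by (subst integral_density)
    (auto simp: normal_density_nonneg fact_numeral power2_eq_square field_simps power4_eq_xxxx)

lemma
  fixes k :: "'i \<Rightarrow> nat"
  assumes "\<sigma> > 0" "finite I"
  shows integrable_PiM_centered_normal_monomial:
      "integrable (PiM I (\<lambda>_. centered_normal \<sigma>)) (\<lambda>w. \<Prod>x\<in>I. w x ^ k x)"
    and integral_PiM_centered_normal_monomial:
      "integral\<^sup>L (PiM I (\<lambda>_. centered_normal \<sigma>)) (\<lambda>w. \<Prod>x\<in>I. w x ^ k x)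
        = (\<Prod>x\<in>I. integral\<^sup>L (centered_normal \<sigma>) (\<lambda>t. t ^ k x))"
proof -
  interpret product_sigma_finite "\<lambda>_. centered_normal \<sigma>"
    unfolding product_sigma_finite_def
    using prob_space_centered_normal[OF assms(1)] prob_space_imp_sigma_finite by blast
  show "integrable (PiM I (\<lambda>_. centered_normal \<sigma>)) (\<lambda>w. \<Prod>x\<in>I. w x ^ k x)"
    using assms by (intro product_integrable_prod integrable_centered_normal_power)
  show "integral\<^sup>L (PiM I (\<lambda>_. centered_normal \<sigma>)) (\<lambda>w. \<Prod>x\<in>I. w x ^ k x)
      = (\<Prod>x\<in>I. integral\<^sup>L (centered_normal \<sigma>) (\<lambda>t. t ^ k x))"
    using assms by (intro product_integral_prod integrable_centered_normal_power)
qed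

lemma
  assumes "\<sigma> > 0" "finite I" "a \<in> I"
  shows integrable_PiM_centered_normal_coord_pow4:
      "integrable (PiM I (\<lambda>_. centered_normal \<sigma>)) (\<lambda>w. w a ^ 4)"
    and integral_PiM_centered_normal_coord_pow4:
      "integral\<^sup>L (PiM I (\<lambda>_. centered_normal \<sigma>)) (\<lambda>w. w a ^ 4) = 3 * \<sigma> ^ 4"
proof -
  define k where "k x = (if x = a then 4 else 0 :: nat)" for x
  have "w x ^ k x = (if x = a then w x ^ 4 else 1)" for w :: "_ \<Rightarrow> real" and x
    by (simp add: k_def)
  then have "(\<Prod>x\<in>I. w x ^ k x) = w a ^ 4" for w :: "_ \<Rightarrow> real"
    using assms(2,3) by (simp add: prod.delta)
  moreover have "(\<Prod>x\<in>I. integral\<^sup>L (centered_normal \<sigma>) (\<lambda>t. t ^ k x)) = 3 * \<sigma> ^ 4"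
    using assms prob_space.prob_space[OF prob_space_centered_normal[OF assms(1)]]
    by (simp add: k_def if_distrib[of "\<lambda>k. integral\<^sup>L _ (\<lambda>t. t ^ k)"] prod.delta
        integral_centered_normal_power4 cong: if_cong)
  ultimately show "integrable (PiM I (\<lambda>_. centered_normal \<sigma>)) (\<lambda>w. w a ^ 4)"
    and "integral\<^sup>L (PiM I (\<lambda>_. centered_normal \<sigma>)) (\<lambda>w. w a ^ 4) = 3 * \<sigma> ^ 4"
    using integrable_PiM_centered_normal_monomial[OF assms(1,2), of k]
      integral_PiM_centered_normal_monomial[OF assms(1,2), of k] by simp_all
qed

lemma integral_PiM_centered_normal_distinct_coords4:
  assumes "\<sigma> > 0" "finite I" "{a, b, c, e} \<subseteq> I" "distinct [a, b, c, e]"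
  shows "integral\<^sup>L (PiM I (\<lambda>_. centered_normal \<sigma>)) (\<lambda>w. w a * w b * w c * w e) = 0"
proof -
  define k where "k x = (if x \<in> {a, b, c, e} then 1 else 0 :: nat)" for x
  have "(\<Prod>x\<in>I. w x ^ k x) = w a * w b * w c * w e" for w :: "_ \<Rightarrow> real"
  proof -
    have "(\<Prod>x\<in>I. w x ^ k x) = (\<Prod>x\<in>I \<inter> {a, b, c, e}. w x)"
      unfolding prod.inter_restrict[OF assms(2)] by (intro prod.cong) (auto simp: k_def)
    also have "I \<inter> {a, b, c, e} = {a, b, c, e}" using assms(3) by blast
    finally show ?thesis using assms(4) by (simp add: mult_ac)
  qed
  moreover have "(\<Prod>x\<in>I. integral\<^sup>L (centered_normal \<sigma>) (\<lambda>t. t ^ k x)) = 0"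
    using assms integral_centered_normal_power_odd[OF assms(1), of 0]
    by (intro prod_zero bexI[of _ a]) (auto simp: k_def)
  ultimately show ?thesis
    using integral_PiM_centered_normal_monomial[OF assms(1,2), of k] by simp
qed

lemma abs_mult4_le_sum_power4:
  fixes x1 x2 x3 x4 :: real
  shows "\<bar>x1 * x2 * x3 * x4\<bar> \<le> (x1 ^ 4 + x2 ^ 4 + x3 ^ 4 + x4 ^ 4) / 4"
proof -
  have amgm: "\<bar>u * v\<bar> \<le> (u\<^sup>2 + v\<^sup>2) / 2" for u v :: real
    using sum_squares_bound[of "\<bar>u\<bar>" "\<bar>v\<bar>"] by (simp add: abs_mult)
  have "\<bar>x1 * x2 * x3 * x4\<bar> = \<bar>x1 * x2\<bar> * \<bar>x3 * x4\<bar>" by (simp add: abs_mult)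
  also have "\<dots> \<le> ((x1\<^sup>2 + x2\<^sup>2) / 2) * ((x3\<^sup>2 + x4\<^sup>2) / 2)"
    using amgm[of x1 x2] amgm[of x3 x4] by (intro mult_mono) auto
  also have "\<dots> \<le> (((x1\<^sup>2 + x2\<^sup>2) / 2)\<^sup>2 + ((x3\<^sup>2 + x4\<^sup>2) / 2)\<^sup>2) / 2"
    using amgm[of "(x1\<^sup>2 + x2\<^sup>2) / 2" "(x3\<^sup>2 + x4\<^sup>2) / 2"] by simp
  also have "\<dots> = ((x1\<^sup>2 + x2\<^sup>2)\<^sup>2 + (x3\<^sup>2 + x4\<^sup>2)\<^sup>2) / 8"
    by (simp add: power_divide)
  also have "\<dots> \<le> (x1 ^ 4 + x2 ^ 4 + x3 ^ 4 + x4 ^ 4) / 4"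
    using sum_squares_bound[of "x1\<^sup>2" "x2\<^sup>2"] sum_squares_bound[of "x3\<^sup>2" "x4\<^sup>2"]
    by (simp add: power2_sum flip: power_mult)
  finally show ?thesis .
qed

lemma
  assumes "\<sigma> > 0" "finite I" "{a, b, c, e} \<subseteq> I"
  shows integrable_PiM_centered_normal_coords4:
      "integrable (PiM I (\<lambda>_. centered_normal \<sigma>)) (\<lambda>w. w a * w b * w c * w e)"
    and integral_PiM_centered_normal_coords4_le:
      "integral\<^sup>L (PiM I (\<lambda>_. centered_normal \<sigma>)) (\<lambda>w. w a * w b * w c * w e) \<le> 3 * \<sigma> ^ 4"
proof -
  let ?M = "PiM I (\<lambda>_. centered_normal \<sigma>)"
  let ?B = "\<lambda>w. (w a ^ 4 + w b ^ 4 + w c ^ 4 + w e ^ 4) / 4"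
  have coord4: "integrable ?M (\<lambda>w. w x ^ 4)" "integral\<^sup>L ?M (\<lambda>w. w x ^ 4) = 3 * \<sigma> ^ 4"
    if "x \<in> {a, b, c, e}" for x
    using that assms integrable_PiM_centered_normal_coord_pow4 integral_PiM_centered_normal_coord_pow4
    by auto
  have int_B: "integrable ?M ?B" using coord4(1) by simp
  have "(\<lambda>w. w x) \<in> borel_measurable ?M" if "x \<in> I" for x
    using that by measurable
  then have "(\<lambda>w. w a * w b * w c * w e) \<in> borel_measurable ?M"
    using assms(3) by (intro borel_measurable_times) auto
  then show int: "integrable ?M (\<lambda>w. w a * w b * w c * w e)"
    using abs_mult4_le_sum_power4 by (intro Bochner_Integration.integrable_bound[OF int_B]) auto
  have "integral\<^sup>L ?M (\<lambda>w. w a * w b * w c * w e) \<le> integral\<^sup>L ?M ?B"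
    using abs_mult4_le_sum_power4 abs_ge_self order_trans
    by (intro integral_mono[OF int int_B]) blast
  also have "\<dots> = 3 * \<sigma> ^ 4" using coord4 by simp
  finally show "integral\<^sup>L ?M (\<lambda>w. w a * w b * w c * w e) \<le> 3 * \<sigma> ^ 4" .
qed

lemma integral_PiM_centered_normal_gram_term_le:
  fixes x :: "'r \<Rightarrow> 'b \<Rightarrow> 'i"
  assumes "\<sigma> > 0" "finite I" "\<And>r b s b'. x r b = x s b' \<Longrightarrow> r = s \<and> b = b'"
    and "{x r b, x s b, x r b', x s b'} \<subseteq> I"
  shows "integral\<^sup>L (PiM I (\<lambda>_. centered_normal \<sigma>))
      (\<lambda>w. w (x r b) * w (x s b) * w (x r b') * w (x s b'))
    \<le> (if r = s then 3 * \<sigma> ^ 4 else 0) + (if b = b' then 3 * \<sigma> ^ 4 else 0)"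
proof (cases "r \<noteq> s \<and> b \<noteq> b'")
  case True
  with assms(3) have "distinct [x r b, x s b, x r b', x s b']"
    by auto
  with True show ?thesis
    using integral_PiM_centered_normal_distinct_coords4[OF assms(1,2,4)] by simp
next
  case False
  with assms(1) have "3 * \<sigma> ^ 4 \<le> (if r = s then 3 * \<sigma> ^ 4 else 0) + (if b = b' then 3 * \<sigma> ^ 4 else 0)"
    by auto
  with integral_PiM_centered_normal_coords4_le[OF assms(1,2,4)] show ?thesis
    by linarith
qed

lemma
  fixes n d p :: nat and \<sigma> :: real
  assumes "\<sigma> > 0"
  defines "M \<equiv> PiM ({..<n} \<times> {..<d} \<times> {..<d * p}) (\<lambda>_. centered_normal \<sigma>)"
  shows integrable_gram_sq: "integrable M (gram_sq d p n)"
    and integral_gram_sq_le: "integral\<^sup>L M (gram_sq d p n)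
      \<le> 3 * \<sigma> ^ 4 * (real (n * d) * real (d * p) ^ 2 + real (n * d) ^ 2 * real (d * p))"
proof -
  let ?R = "{..<n} \<times> {..<d}" and ?B = "{..<d * p}"
  let ?x = "\<lambda>r b. (fst r, snd r, b)"
  let ?T = "\<lambda>r s b b' w. w (?x r b) * w (?x s b) * w (?x r b') * w (?x s b')"
  have "?x r b = ?x s b' \<Longrightarrow> r = s \<and> b = b'" for r b s b'
    by (simp add: prod_eq_iff)
  moreover have coords: "{?x r b, ?x s b, ?x r b', ?x s b'} \<subseteq> {..<n} \<times> {..<d} \<times> {..<d * p}"
    if "r \<in> ?R" "s \<in> ?R" "b \<in> ?B" "b' \<in> ?B" for r s b b'
    using that by (auto simp: mem_Times_iff)
  ultimately have int_T: "integrable M (?T r s b b')"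
    and integral_T: "integral\<^sup>L M (?T r s b b')
      \<le> (if r = s then 3 * \<sigma> ^ 4 else 0) + (if b = b' then 3 * \<sigma> ^ 4 else 0)"
    if "r \<in> ?R" "s \<in> ?R" "b \<in> ?B" "b' \<in> ?B" for r s b b'
    using integrable_PiM_centered_normal_coords4[OF assms(1) _ coords[OF that]]
      integral_PiM_centered_normal_gram_term_le[OF assms(1) _ _ coords[OF that]]
    unfolding M_def by auto
  have gram: "gram_sq d p n = (\<lambda>w. \<Sum>r\<in>?R. \<Sum>s\<in>?R. \<Sum>b\<in>?B. \<Sum>b'\<in>?B. ?T r s b b' w)"
    by (simp add: fun_eq_iff gram_sq_def power2_eq_square sum_product mult_ac)
  show "integrable M (gram_sq d p n)"
    unfolding gram by (intro Bochner_Integration.integrable_sum int_T)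
  have "integral\<^sup>L M (gram_sq d p n) = (\<Sum>r\<in>?R. integral\<^sup>L M (\<lambda>w. \<Sum>s\<in>?R. \<Sum>b\<in>?B. \<Sum>b'\<in>?B. ?T r s b b' w))"
    unfolding gram by (intro Bochner_Integration.integral_sum Bochner_Integration.integrable_sum int_T)
  also have "\<dots> = (\<Sum>r\<in>?R. \<Sum>s\<in>?R. integral\<^sup>L M (\<lambda>w. \<Sum>b\<in>?B. \<Sum>b'\<in>?B. ?T r s b b' w))"
    by (intro sum.cong refl Bochner_Integration.integral_sum Bochner_Integration.integrable_sum int_T)
  also have "\<dots> = (\<Sum>r\<in>?R. \<Sum>s\<in>?R. \<Sum>b\<in>?B. integral\<^sup>L M (\<lambda>w. \<Sum>b'\<in>?B. ?T r s b b' w))"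
    by (intro sum.cong refl Bochner_Integration.integral_sum Bochner_Integration.integrable_sum int_T)
  also have "\<dots> = (\<Sum>r\<in>?R. \<Sum>s\<in>?R. \<Sum>b\<in>?B. \<Sum>b'\<in>?B. integral\<^sup>L M (?T r s b b'))"
    by (intro sum.cong refl Bochner_Integration.integral_sum int_T)
  also have "\<dots> \<le> (\<Sum>r\<in>?R. \<Sum>s\<in>?R. \<Sum>b\<in>?B. \<Sum>b'\<in>?B.
      (if r = s then 3 * \<sigma> ^ 4 else 0) + (if b = b' then 3 * \<sigma> ^ 4 else 0))"
    by (intro sum_mono integral_T)
  also have "\<dots> = 3 * \<sigma> ^ 4 * (real (n * d) * real (d * p) ^ 2 + real (n * d) ^ 2 * real (d * p))"
    by (simp add: sum.distrib sum.delta' card_cartesian_product flip: sum_distrib_left)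
      (simp add: power2_eq_square algebra_simps)
  finally show "integral\<^sup>L M (gram_sq d p n)
      \<le> 3 * \<sigma> ^ 4 * (real (n * d) * real (d * p) ^ 2 + real (n * d) ^ 2 * real (d * p))" .
qed

lemma borel_measurable_id_PiM:
  fixes I :: "'i::countable set" and N :: "real measure"
  assumes "sets N = sets borel"
  shows "(\<lambda>w. w) \<in> borel_measurable (PiM I (\<lambda>_. N))"
proof (rule measurable_coordinatewise_then_product)
  fix x
  show "(\<lambda>w. w x) \<in> borel_measurable (PiM I (\<lambda>_. N))"
  proof (cases "x \<in> I")
    case True
    then show ?thesis
      using measurable_component_singleton[of x I "\<lambda>_. N"] measurable_cong_sets[OF refl assms]
      by blast
  next
    case False
    then have "w x = undefined" if "w \<in> space (PiM I (\<lambda>_. N))" for w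
      using that by (auto simp: space_PiM)
    then show ?thesis by (subst measurable_cong[where g = "\<lambda>_. undefined"]) auto
  qed
qed

lemma continuous_on_aligned_sq:
  assumes "\<forall>i<n. Os i \<in> carrier_mat d d"
  shows "continuous_on UNIV (aligned_sq d p n Os)"
  unfolding aligned_sq_eq_sum[OF assms, abs_def]
  by (intro continuous_intros continuous_on_product_coordinates)

lemma sets_SUP_aligned_sq_le:
  fixes I :: "(nat \<times> nat \<times> nat) set" and N :: "real measure"
  assumes "sets N = sets borel" "n > 0"
  shows "{w \<in> space (PiM I (\<lambda>_. N)).
      (SUP Os \<in> {Os. \<forall>i<n. Os i \<in> orth_group d}. aligned_sq d p n Os w) \<le> t}
    \<in> sets (PiM I (\<lambda>_. N))"
proof -
  let ?O = "{Os. \<forall>i<n. Os i \<in> orth_group d}"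
  define C where "C = (\<Inter>Os\<in>?O. {w. aligned_sq d p n Os w \<le> t})"
  have "closed C" unfolding C_def
    by (intro closed_INT ballI closed_Collect_le continuous_on_aligned_sq continuous_on_const)
      (auto simp: orth_group_def)
  then have "(\<lambda>w. w) -` C \<inter> space (PiM I (\<lambda>_. N)) \<in> sets (PiM I (\<lambda>_. N))"
    by (intro measurable_sets[OF borel_measurable_id_PiM[OF assms(1)]] borel_closed)
  moreover have "(SUP Os \<in> ?O. aligned_sq d p n Os w) \<le> t \<longleftrightarrow> w \<in> C" for w
  proof -
    have "bdd_above ((\<lambda>Os. aligned_sq d p n Os w) ` ?O)"
      using aligned_sq_le_gram_sq[OF _ assms(2)] by (auto intro!: bdd_aboveI2)
    then show ?thesis
      unfolding C_def using cSUP_le_iff[OF orth_tuples_nonempty] by auto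
  qed
  ultimately show ?thesis
    by (simp add: vimage_def Int_def conj_commute)
qed

lemma prob_gram_sq_less_ge:
  fixes n d p :: nat and \<sigma> :: real
  assumes "\<sigma> > 0" "n > 0" "d > 0" "p > 0"
  defines "M \<equiv> PiM ({..<n} \<times> {..<d} \<times> {..<d * p}) (\<lambda>_. centered_normal \<sigma>)"
    and "B \<equiv> 3 * \<sigma> ^ 4 * (real (n * d) * real (d * p) ^ 2 + real (n * d) ^ 2 * real (d * p))"
  shows "measure M {w \<in> space M. gram_sq d p n w < 3 * B} \<ge> 2 / 3"
proof -
  interpret prob_space M
    unfolding M_def by (intro prob_space_PiM prob_space_centered_normal assms(1))
  have "B > 0" unfolding B_def using assms
    by (intro mult_pos_pos add_pos_pos zero_less_power) auto
  have nonneg: "gram_sq d p n w \<ge> 0" for w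
    by (simp add: gram_sq_def sum_nonneg)
  have int: "integrable M (gram_sq d p n)"
    unfolding M_def by (rule integrable_gram_sq[OF assms(1)])
  then have [measurable]: "gram_sq d p n \<in> borel_measurable M"
    by (rule borel_measurable_integrable)
  have "measure M {w \<in> space M. 3 * B \<le> gram_sq d p n w} \<le> integral\<^sup>L M (gram_sq d p n) / (3 * B)"
    using \<open>B > 0\<close> by (intro integral_Markov_inequality_measure[OF int, of "space M"])
      (auto intro: AE_I2 nonneg)
  also have "\<dots> \<le> B / (3 * B)"
    using \<open>B > 0\<close> integral_gram_sq_le[OF assms(1)] unfolding M_def B_def
    by (intro divide_right_mono) auto
  also have "\<dots> = 1 / 3" using \<open>B > 0\<close> by simp
  finally have "measure M {w \<in> space M. 3 * B \<le> gram_sq d p n w} \<le> 1 / 3" .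
  moreover have "{w \<in> space M. gram_sq d p n w < 3 * B}
      = space M - {w \<in> space M. 3 * B \<le> gram_sq d p n w}"
    by auto
  ultimately show ?thesis
    using prob_compl[of "{w \<in> space M. 3 * B \<le> gram_sq d p n w}"] by simp
qed

lemma gram_threshold_le:
  fixes d n p :: nat and \<epsilon> \<sigma> :: real
  assumes "d > 0" "n > 0" "p > 0" "\<epsilon> > 0"
    and "18 * real d ^ 3 / \<epsilon>\<^sup>2 < real n" "18 * real d ^ 3 / \<epsilon>\<^sup>2 < real p"
    and "\<sigma>\<^sup>2 = 1 / real (d * p)"
  shows "real d / real n
    * sqrt (3 * (3 * \<sigma> ^ 4 * (real (n * d) * real (d * p) ^ 2 + real (n * d) ^ 2 * real (d * p))))
    \<le> \<epsilon>"
proof -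
  let ?X = "3 * (3 * \<sigma> ^ 4 * (real (n * d) * real (d * p) ^ 2 + real (n * d) ^ 2 * real (d * p)))"
  have \<sigma>4: "\<sigma> ^ 4 = 1 / (real d * real p)\<^sup>2"
    using assms(7) by (metis of_nat_mult power2_eq_square power_divide power4_eq_xxxx one_power2 mult.assoc)
  have "(real d / real n)\<^sup>2 * ?X = 9 * (real d ^ 3 / real n + real d ^ 3 / real p)"
    using assms(1-3) unfolding \<sigma>4 by (simp add: field_simps power2_eq_square power3_eq_cube)
  also have "\<dots> \<le> \<epsilon>\<^sup>2"
  proof -
    have "real d ^ 3 / real n < \<epsilon>\<^sup>2 / 18" "real d ^ 3 / real p < \<epsilon>\<^sup>2 / 18"
      using assms(1-6) by (simp_all add: field_simps)
    then show ?thesis by (simp add: field_simps)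
  qed
  finally have "sqrt ((real d / real n)\<^sup>2 * ?X) \<le> sqrt (\<epsilon>\<^sup>2)"
    by (rule real_sqrt_le_mono)
  then show ?thesis
    using assms(1,2,4) by (simp add: real_sqrt_mult)
qed

lemma prob_SUP_aligned_sq_le_ge:
  fixes n d p :: nat and \<sigma> t :: real
  assumes "\<sigma> > 0" "n > 0" "d > 0" "p > 0"
    and "real d / real n
      * sqrt (3 * (3 * \<sigma> ^ 4 * (real (n * d) * real (d * p) ^ 2 + real (n * d) ^ 2 * real (d * p))))
      \<le> t"
  defines "M \<equiv> PiM ({..<n} \<times> {..<d} \<times> {..<d * p}) (\<lambda>_. centered_normal \<sigma>)"
  shows "measure M {w \<in> space M.
      (SUP Os \<in> {Os. \<forall>i<n. Os i \<in> orth_group d}. aligned_sq d p n Os w) \<le> t} \<ge> 2 / 3"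
proof -
  interpret prob_space M
    unfolding M_def by (intro prob_space_PiM prob_space_centered_normal assms(1))
  define B where "B = 3 * \<sigma> ^ 4 * (real (n * d) * real (d * p) ^ 2 + real (n * d) ^ 2 * real (d * p))"
  define E where "E = {w \<in> space M.
      (SUP Os \<in> {Os. \<forall>i<n. Os i \<in> orth_group d}. aligned_sq d p n Os w) \<le> t}"
  have "{w \<in> space M. gram_sq d p n w < 3 * B} \<subseteq> E"
  proof
    fix w assume "w \<in> {w \<in> space M. gram_sq d p n w < 3 * B}"
    then have "w \<in> space M" and gram: "gram_sq d p n w < 3 * B" by auto
    have "(SUP Os \<in> {Os. \<forall>i<n. Os i \<in> orth_group d}. aligned_sq d p n Os w)
        \<le> real d / real n * sqrt (gram_sq d p n w)"
      by (rule SUP_aligned_sq_le_gram_sq[OF assms(2)])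
    also have "\<dots> \<le> real d / real n * sqrt (3 * B)"
      using gram by (intro mult_left_mono real_sqrt_le_mono) auto
    also have "\<dots> \<le> t" unfolding B_def by (rule assms(5))
    finally show "w \<in> E" unfolding E_def using \<open>w \<in> space M\<close> by simp
  qed
  moreover have "E \<in> sets M"
    unfolding E_def M_def using assms(2) by (intro sets_SUP_aligned_sq_le) simp_all
  ultimately have "measure M {w \<in> space M. gram_sq d p n w < 3 * B} \<le> measure M E"
    by (rule finite_measure_mono)
  moreover have "measure M {w \<in> space M. gram_sq d p n w < 3 * B} \<ge> 2 / 3"
    unfolding M_def B_def using assms(1-4) by (rule prob_gram_sq_less_ge)
  ultimately show ?thesis unfolding E_def by linarith
qed

theorem lemma2:
  fixes d :: nat and \<epsilon> :: real
  assumes "d > 0" and "\<epsilon> > 0"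
  shows "\<exists>p0 n0 :: nat. \<forall>p n :: nat. p > p0 \<longrightarrow> n > n0 \<longrightarrow>
    (let M = gauss_field ({..<n} \<times> {..<d} \<times> {..<d * p}) (1 / real (d * p))
     in measure M {w \<in> space M.
          (SUP Os \<in> {Os. \<forall>i<n. Os i \<in> orth_group d}. aligned_sq d p n Os w)
            \<le> real d / real p * (alpha_R d)\<^sup>2 + \<epsilon>} > 1 / 2)"
proof (intro exI allI impI)
  define K :: nat where "K = nat \<lceil>18 * real d ^ 3 / \<epsilon>\<^sup>2\<rceil>"
  fix p n :: nat
  assume "p > K" "n > K"
  moreover have "18 * real d ^ 3 / \<epsilon>\<^sup>2 \<le> real K"
    unfolding K_def by (rule real_nat_ceiling_ge)
  ultimately have pn: "p > 0" "n > 0" "18 * real d ^ 3 / \<epsilon>\<^sup>2 < real n" "18 * real d ^ 3 / \<epsilon>\<^sup>2 < real p"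
    by linarith+
  define \<sigma> where "\<sigma> = sqrt (1 / real (d * p))"
  have \<sigma>: "\<sigma> > 0" "\<sigma>\<^sup>2 = 1 / real (d * p)"
    unfolding \<sigma>_def using \<open>d > 0\<close> \<open>p > 0\<close> by simp_all
  have "real d / real n
      * sqrt (3 * (3 * \<sigma> ^ 4 * (real (n * d) * real (d * p) ^ 2 + real (n * d) ^ 2 * real (d * p))))
      \<le> real d / real p * (alpha_R d)\<^sup>2 + \<epsilon>"
    using gram_threshold_le[OF assms(1) pn(2,1) assms(2) pn(3,4) \<sigma>(2)] by (simp add: add_increasing)
  from prob_SUP_aligned_sq_le_ge[OF \<sigma>(1) pn(2) assms(1) pn(1) this]
  show "let M = gauss_field ({..<n} \<times> {..<d} \<times> {..<d * p}) (1 / real (d * p))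
     in measure M {w \<in> space M.
          (SUP Os \<in> {Os. \<forall>i<n. Os i \<in> orth_group d}. aligned_sq d p n Os w)
            \<le> real d / real p * (alpha_R d)\<^sup>2 + \<epsilon>} > 1 / 2"
    unfolding gauss_field_eq_PiM_centered_normal Let_def \<sigma>_def by simp
qed

end
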